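(* Let $(X,\mathcal U)$ be a non-archimedean uniform space and $\mathcal B$ a base of $\mathcal U$ consisting of equivalence relations. Then: (1) realizing $A_{NA}(X,\mathcal U)$ on the free abelian group $A(X)$, and letting $\langle\varepsilon\rangle$ denote the subgroup of $A(X)$ generated by $\{x-y:(x,y)\in\varepsilon\}$, the family $\{\langle\varepsilon\rangle:\varepsilon\in\mathcal B\}$ is a base of neighborhoods of $0$ in $A_{NA}(X,\mathcal U)$; (2) realizing $B_{NA}(X,\mathcal U)$ on the free Boolean group $B(X)$, and letting $\langle\varepsilon\rangle$ denote the subgroup of $B(X)$ generated by $\{x-y:(x,y)\in\varepsilon\}$, the family $\{\langle\varepsilon\rangle:\varepsilon\in\mathcal B\}$ is a base of neighborhoods of $0$ in $B_{NA}(X,\mathcal U)$.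
   Context: A uniform space is non-archimedean if its uniformity has a base of equivalence relations. A topological group is non-archimedean if it has a local base at the identity of open subgroups; Boolean if every non-identity element has order 2. $A_{NA}(X,\mathcal U)$ (resp. $B_{NA}(X,\mathcal U)$) is the abelian (resp. Boolean) non-archimedean Hausdorff group with uniformly continuous $i\colon X\to G$ through which every uniformly continuous map into such a group factors uniquely by a continuous homomorphism; it is algebraically $A(X)$ (resp. $B(X)$) with $i$ the inclusion of generators. *)

theory Defs
  imports "HOL-Analysis.Analysis" "HOL-Algebra.Free_Abelian_Groups" "HOL-Algebra.Generated_Groups"
begin

definition uniformity_on :: "'a set \<Rightarrow> ('a \<times> 'a) set set \<Rightarrow> bool" where
  "uniformity_on X U \<longleftrightarrow>
     U \<noteq> {} \<and>
     (\<forall>e\<in>U. Id_on X \<subseteq> e \<and> e \<subseteq> X \<times> X) \<and>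
     (\<forall>e\<in>U. \<forall>f. e \<subseteq> f \<and> f \<subseteq> X \<times> X \<longrightarrow> f \<in> U) \<and>
     (\<forall>e\<in>U. \<forall>f\<in>U. e \<inter> f \<in> U) \<and>
     (\<forall>e\<in>U. e\<inverse> \<in> U) \<and>
     (\<forall>e\<in>U. \<exists>f\<in>U. f O f \<subseteq> e)"

definition uniformity_base :: "('a \<times> 'a) set set \<Rightarrow> ('a \<times> 'a) set set \<Rightarrow> bool" where
  "uniformity_base U B \<longleftrightarrow> B \<subseteq> U \<and> (\<forall>e\<in>U. \<exists>b\<in>B. b \<subseteq> e)"

definition non_archimedean_uniform_space :: "'a set \<Rightarrow> ('a \<times> 'a) set set \<Rightarrow> bool" where
  "non_archimedean_uniform_space X U \<longleftrightarrow>
     uniformity_on X U \<and> (\<exists>B. uniformity_base U B \<and> (\<forall>e\<in>B. equiv X e))"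

definition topological_group :: "('g, 'm) monoid_scheme \<Rightarrow> 'g topology \<Rightarrow> bool" where
  "topological_group G T \<longleftrightarrow>
     group G \<and> topspace T = carrier G \<and>
     continuous_map (prod_topology T T) T (\<lambda>(x, y). x \<otimes>\<^bsub>G\<^esub> y) \<and>
     continuous_map T T (\<lambda>x. inv\<^bsub>G\<^esub> x)"

definition non_archimedean_group :: "('g, 'm) monoid_scheme \<Rightarrow> 'g topology \<Rightarrow> bool" where
  "non_archimedean_group G T \<longleftrightarrow>
     topological_group G T \<and>
     (\<forall>W. openin T W \<and> \<one>\<^bsub>G\<^esub> \<in> W \<longrightarrow> (\<exists>H. subgroup H G \<and> openin T H \<and> H \<subseteq> W))"

definition boolean_group :: "('g, 'm) monoid_scheme \<Rightarrow> bool" where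
  "boolean_group G \<longleftrightarrow> group G \<and> (\<forall>x\<in>carrier G. x \<otimes>\<^bsub>G\<^esub> x = \<one>\<^bsub>G\<^esub>)"

definition nbhd_base_at_one :: "('g, 'm) monoid_scheme \<Rightarrow> 'g topology \<Rightarrow> 'g set set \<Rightarrow> bool" where
  "nbhd_base_at_one G T F \<longleftrightarrow>
     (\<forall>V\<in>F. V \<subseteq> topspace T \<and> (\<exists>W. openin T W \<and> \<one>\<^bsub>G\<^esub> \<in> W \<and> W \<subseteq> V)) \<and>
     (\<forall>W. openin T W \<and> \<one>\<^bsub>G\<^esub> \<in> W \<longrightarrow> (\<exists>V\<in>F. V \<subseteq> W))"

text \<open>Uniform continuity of a map from a uniform space into an abelian topological group
  (for abelian groups the left and right group uniformities coincide).\<close>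
definition unif_cont_into_group ::
  "'a set \<Rightarrow> ('a \<times> 'a) set set \<Rightarrow> ('g, 'm) monoid_scheme \<Rightarrow> 'g topology \<Rightarrow> ('a \<Rightarrow> 'g) \<Rightarrow> bool" where
  "unif_cont_into_group X U G T f \<longleftrightarrow>
     f ` X \<subseteq> carrier G \<and>
     (\<forall>W. openin T W \<and> \<one>\<^bsub>G\<^esub> \<in> W \<longrightarrow>
        (\<exists>e\<in>U. \<forall>(x, y)\<in>e. f x \<otimes>\<^bsub>G\<^esub> inv\<^bsub>G\<^esub> (f y) \<in> W))"

definition cont_hom ::
  "('g, 'm) monoid_scheme \<Rightarrow> 'g topology \<Rightarrow> ('h, 'n) monoid_scheme \<Rightarrow> 'h topology \<Rightarrow> ('g \<Rightarrow> 'h) \<Rightarrow> bool" where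
  "cont_hom G T H S h \<longleftrightarrow> h \<in> hom G H \<and> continuous_map T S h"

text \<open>B(X): finite subsets of X under symmetric difference; the generator x is {x}.\<close>
definition free_Boolean_group :: "'a set \<Rightarrow> 'a set monoid" where
  "free_Boolean_group X =
     \<lparr>carrier = {A. finite A \<and> A \<subseteq> X}, monoid.mult = (\<lambda>A B. (A - B) \<union> (B - A)), one = {}\<rparr>"

text \<open>T is a topology on A(X) realizing A_NA(X,U). The universal property is quantified
  over target groups whose carrier type is the carrier type of A(X).\<close>
definition is_A_NA :: "'a set \<Rightarrow> ('a \<times> 'a) set set \<Rightarrow> ('a \<Rightarrow>\<^sub>0 int) topology \<Rightarrow> bool" where
  "is_A_NA X U T \<longleftrightarrow>
     comm_group (free_Abelian_group X) \<and>
     non_archimedean_group (free_Abelian_group X) T \<and> Hausdorff_space T \<and>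
     unif_cont_into_group X U (free_Abelian_group X) T frag_of \<and>
     (\<forall>(H :: ('a \<Rightarrow>\<^sub>0 int) monoid) S f.
        comm_group H \<and> non_archimedean_group H S \<and> Hausdorff_space S \<and>
        unif_cont_into_group X U H S f \<longrightarrow>
          (\<exists>h. cont_hom (free_Abelian_group X) T H S h \<and> (\<forall>x\<in>X. h (frag_of x) = f x)) \<and>
          (\<forall>h1 h2. cont_hom (free_Abelian_group X) T H S h1 \<and> (\<forall>x\<in>X. h1 (frag_of x) = f x) \<and>
                   cont_hom (free_Abelian_group X) T H S h2 \<and> (\<forall>x\<in>X. h2 (frag_of x) = f x) \<longrightarrow>
                   (\<forall>g\<in>carrier (free_Abelian_group X). h1 g = h2 g)))"

definition is_B_NA :: "'a set \<Rightarrow> ('a \<times> 'a) set set \<Rightarrow> 'a set topology \<Rightarrow> bool" where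
  "is_B_NA X U T \<longleftrightarrow>
     boolean_group (free_Boolean_group X) \<and>
     non_archimedean_group (free_Boolean_group X) T \<and> Hausdorff_space T \<and>
     unif_cont_into_group X U (free_Boolean_group X) T (\<lambda>x. {x}) \<and>
     (\<forall>(H :: 'a set monoid) S f.
        boolean_group H \<and> non_archimedean_group H S \<and> Hausdorff_space S \<and>
        unif_cont_into_group X U H S f \<longrightarrow>
          (\<exists>h. cont_hom (free_Boolean_group X) T H S h \<and> (\<forall>x\<in>X. h {x} = f x)) \<and>
          (\<forall>h1 h2. cont_hom (free_Boolean_group X) T H S h1 \<and> (\<forall>x\<in>X. h1 {x} = f x) \<and>
                   cont_hom (free_Boolean_group X) T H S h2 \<and> (\<forall>x\<in>X. h2 {x} = f x) \<longrightarrow>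
                   (\<forall>g\<in>carrier (free_Boolean_group X). h1 g = h2 g)))"

end

theory Submission
  imports Defs
begin

(* For e in B choose a representative r x of each e-class. The map x |-> r x into the free group
   on r ` X, with the discrete topology, is constant on e-related pairs, hence uniformly continuous,
   so it extends to a continuous homomorphism h with open kernel. As the group is abelian,
   g |-> g - h g is a homomorphism, and it maps generators into <e>; hence ker h is contained in <e>.
   Conversely, an open neighbourhood of the identity contains an open subgroup K, uniform continuity
   of the generator map gives e in B with x - y in K for (x, y) in e, and then <e> is contained in K. *)

lemma non_archimedean_group_discrete_topology:
  assumes "group H"
  shows "non_archimedean_group H (discrete_topology (carrier H))"
proof -
  interpret group H by fact
  have "topological_group H (discrete_topology (carrier H))"
    unfolding topological_group_def
    by (auto simp: is_group prod_topology_discrete_topology[symmetric])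
  then show ?thesis
    unfolding non_archimedean_group_def
    using triv_subgroup by (auto simp: openin_discrete_topology)
qed

lemma openin_fibre_discrete_topology:
  assumes "continuous_map T (discrete_topology Y) h"
  shows "openin T {x \<in> topspace T. h x = y}"
proof -
  have "{x \<in> topspace T. h x = y} = {x \<in> topspace T. h x \<in> {y} \<inter> Y}"
    using assms by (auto simp: continuous_map_def)
  moreover have "openin T {x \<in> topspace T. h x \<in> {y} \<inter> Y}"
    by (rule openin_continuous_map_preimage[OF assms]) (simp add: openin_discrete_topology)
  ultimately show ?thesis
    by (simp only:)
qed

lemma unif_cont_into_group_if_constant_on_entourage:
  assumes "group H" "e \<in> U" "f ` X \<subseteq> carrier H" "\<And>x y. (x, y) \<in> e \<Longrightarrow> f x = f y"
    and "e \<subseteq> X \<times> X"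
  shows "unif_cont_into_group X U H S f"
  unfolding unif_cont_into_group_def
proof (intro conjI allI impI)
  fix W assume "openin S W \<and> \<one>\<^bsub>H\<^esub> \<in> W"
  moreover have "f x \<otimes>\<^bsub>H\<^esub> inv\<^bsub>H\<^esub> f y = \<one>\<^bsub>H\<^esub>" if "(x, y) \<in> e" for x y
  proof -
    have "f y \<in> carrier H" using assms(3,5) that by auto
    then show ?thesis using assms(1,4) that by (simp add: group.r_inv)
  qed
  ultimately show "\<exists>e\<in>U. \<forall>(x, y)\<in>e. f x \<otimes>\<^bsub>H\<^esub> inv\<^bsub>H\<^esub> f y \<in> W"
    using assms(2) by (intro bexI[of _ e]) auto
qed (use assms in auto)

lemma equiv_representative_map:
  assumes "equiv X e"
  obtains r where "\<And>x. x \<in> X \<Longrightarrow> (x, r x) \<in> e" "\<And>x y. (x, y) \<in> e \<Longrightarrow> r x = r y"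
proof
  define r where "r x = (SOME y. y \<in> e `` {x})" for x
  show "(x, r x) \<in> e" if "x \<in> X" for x
  proof -
    have "x \<in> e `` {x}" using assms that by (auto simp: equiv_def refl_on_def)
    then have "r x \<in> e `` {x}" unfolding r_def by (rule someI)
    then show ?thesis by simp
  qed
  show "r x = r y" if "(x, y) \<in> e" for x y
    using equiv_class_eq[OF assms that] unfolding r_def by simp
qed

lemma (in group) diffs_subset_carrier:
  assumes "i ` X \<subseteq> carrier G" "e \<subseteq> X \<times> X"
  shows "{i x \<otimes> inv i y | x y. (x, y) \<in> e} \<subseteq> carrier G"
proof clarify
  fix x y assume "(x, y) \<in> e"
  then have "i x \<in> carrier G" "i y \<in> carrier G"
    using assms by auto
  then show "i x \<otimes> inv i y \<in> carrier G"
    by simp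
qed

lemma mult_inv_hom_in_generate_diffs:
  fixes G (structure)
  assumes G: "comm_group G" and q: "q \<in> hom G G"
    and gen: "i ` X \<subseteq> carrier G" and e: "e \<subseteq> X \<times> X"
    and r: "\<forall>x\<in>X. q (i x) = i (r x) \<and> (x, r x) \<in> e"
    and g: "g \<in> generate G (i ` X)"
  shows "g \<otimes> inv q g \<in> generate G {i x \<otimes> inv i y | x y. (x, y) \<in> e}"
proof -
  interpret comm_group G by fact
  interpret q: group_hom G G q by (simp add: group_hom_axioms_def group_hom_def q is_group)
  let ?V = "generate G {i x \<otimes> inv i y | x y. (x, y) \<in> e}"
  have "subgroup ?V G"
    using diffs_subset_carrier[OF gen e] by (rule generate_is_subgroup)
  then interpret V: subgroup ?V G .
  have generator: "i x \<otimes> inv q (i x) \<in> ?V" if "x \<in> X" for x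
  proof -
    have "i x \<otimes> inv q (i x) = i x \<otimes> inv i (r x)" "(x, r x) \<in> e"
      using r that by auto
    then have "i x \<otimes> inv q (i x) \<in> {i x \<otimes> inv i y | x y. (x, y) \<in> e}"
      by blast
    then show ?thesis by (rule generate.incl)
  qed
  from g show ?thesis
  proof (induction g rule: generate.induct)
    case one
    then show ?case by simp
  next
    case (incl a)
    then show ?case using generator by blast
  next
    case (inv a)
    then obtain x where x: "x \<in> X" "a = i x" by blast
    then have "inv a \<otimes> inv q (inv a) = inv (a \<otimes> inv q a)"
      using gen by (auto simp: inv_mult)
    then show ?case using generator[OF x(1)] x(2) V.m_inv_closed by simp
  next
    case (eng a b)
    have "a \<in> carrier G" "b \<in> carrier G"
      using eng gen generate_in_carrier by auto
    then have "a \<otimes> b \<otimes> inv q (a \<otimes> b) = (a \<otimes> inv q a) \<otimes> (b \<otimes> inv q b)"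
      by (simp add: inv_mult m_ac)
    then show ?case using eng V.m_closed by simp
  qed
qed

lemma open_nbhd_in_generate_diffs:
  fixes G (structure)
  assumes T: "topological_group G T" and G: "comm_group G"
    and gen: "i ` X \<subseteq> carrier G" "carrier G \<subseteq> generate G (i ` X)" and e: "e \<subseteq> X \<times> X"
    and q: "q \<in> hom G G" "continuous_map T (discrete_topology Y) q"
    and r: "\<forall>x\<in>X. q (i x) = i (r x) \<and> (x, r x) \<in> e"
  shows "\<exists>W. openin T W \<and> \<one> \<in> W \<and> W \<subseteq> generate G {i x \<otimes> inv i y | x y. (x, y) \<in> e}"
proof -
  interpret comm_group G by fact
  interpret q: group_hom G G q by (simp add: group_hom_axioms_def group_hom_def q is_group)
  have topspace: "topspace T = carrier G"
    using T by (simp add: topological_group_def)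
  have "openin T {g \<in> topspace T. q g = \<one>}"
    using q(2) by (rule openin_fibre_discrete_topology)
  moreover have "\<one> \<in> {g \<in> topspace T. q g = \<one>}"
    using topspace by simp
  moreover have "g \<in> generate G {i x \<otimes> inv i y | x y. (x, y) \<in> e}"
    if "g \<in> carrier G" "q g = \<one>" for g
  proof -
    have "g \<in> generate G (i ` X)"
      using that(1) gen(2) by blast
    then have "g \<otimes> inv q g \<in> generate G {i x \<otimes> inv i y | x y. (x, y) \<in> e}"
      by (rule mult_inv_hom_in_generate_diffs[OF G q(1) gen(1) e r])
    then show ?thesis
      using that by simp
  qed
  ultimately show ?thesis
    using topspace by blast
qed

lemma nbhd_base_at_one_generate_diffs:
  fixes G (structure)
  assumes G: "non_archimedean_group G T" and i: "unif_cont_into_group X U G T i"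
    and B: "uniformity_base U B" "\<And>e. e \<in> B \<Longrightarrow> e \<subseteq> X \<times> X"
    and open_nbhd: "\<And>e. e \<in> B \<Longrightarrow>
      \<exists>W. openin T W \<and> \<one> \<in> W \<and> W \<subseteq> generate G {i x \<otimes> inv i y | x y. (x, y) \<in> e}"
  shows "nbhd_base_at_one G T ((\<lambda>e. generate G {i x \<otimes> inv i y | x y. (x, y) \<in> e}) ` B)"
  unfolding nbhd_base_at_one_def
proof (intro conjI ballI allI impI)
  interpret group G
    using G by (simp add: non_archimedean_group_def topological_group_def)
  have topspace: "topspace T = carrier G"
    using G by (simp add: non_archimedean_group_def topological_group_def)
  have "i ` X \<subseteq> carrier G"
    using i by (simp add: unif_cont_into_group_def)
  then have diffs: "{i x \<otimes> inv i y | x y. (x, y) \<in> e} \<subseteq> carrier G" if "e \<in> B" for e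
    using B(2)[OF that] by (rule diffs_subset_carrier)
  fix V assume "V \<in> (\<lambda>e. generate G {i x \<otimes> inv i y | x y. (x, y) \<in> e}) ` B"
  then obtain e where "e \<in> B" and V: "V = generate G {i x \<otimes> inv i y | x y. (x, y) \<in> e}"
    by blast
  then show "V \<subseteq> topspace T"
    using generate_incl[OF diffs] topspace by simp
  show "\<exists>W. openin T W \<and> \<one> \<in> W \<and> W \<subseteq> V"
    using open_nbhd \<open>e \<in> B\<close> V by simp
next
  interpret group G
    using G by (simp add: non_archimedean_group_def topological_group_def)
  fix W assume W: "openin T W \<and> \<one> \<in> W"
  then obtain K where K: "subgroup K G" "openin T K" "K \<subseteq> W"
    using G by (auto simp: non_archimedean_group_def)
  then have "\<one> \<in> K"
    by (simp add: subgroup.one_closed)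
  then obtain e where "e \<in> U" and e: "\<forall>(x, y)\<in>e. i x \<otimes> inv i y \<in> K"
    using i K(2) by (auto simp: unif_cont_into_group_def)
  then obtain b where "b \<in> B" "b \<subseteq> e"
    using B(1) by (auto simp: uniformity_base_def)
  then have "generate G {i x \<otimes> inv i y | x y. (x, y) \<in> b} \<subseteq> K"
    using e by (intro generate_subgroup_incl[OF _ K(1)]) blast
  then show "\<exists>V\<in>(\<lambda>e. generate G {i x \<otimes> inv i y | x y. (x, y) \<in> e}) ` B. V \<subseteq> W"
    using \<open>b \<in> B\<close> K(3) by blast
qed

lemma carrier_free_Abelian_group_subset_generate:
  "carrier (free_Abelian_group X) \<subseteq> generate (free_Abelian_group X) (frag_of ` X)"
proof
  let ?G = "free_Abelian_group X"
  fix g assume "g \<in> carrier ?G"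
  then have "Poly_Mapping.keys g \<subseteq> X" by simp
  then show "g \<in> generate ?G (frag_of ` X)"
  proof (rule free_Abelian_group_induct[where P = "\<lambda>g. g \<in> generate ?G (frag_of ` X)"])
    show "0 \<in> generate ?G (frag_of ` X)"
      using generate.one[of ?G] by simp
  next
    fix a b :: "'a \<Rightarrow>\<^sub>0 int"
    assume "Poly_Mapping.keys a \<subseteq> X" "Poly_Mapping.keys b \<subseteq> X"
      and "a \<in> generate ?G (frag_of ` X)" "b \<in> generate ?G (frag_of ` X)"
    moreover have "inv\<^bsub>?G\<^esub> b \<in> generate ?G (frag_of ` X)"
      using \<open>b \<in> generate ?G (frag_of ` X)\<close>
      by (intro group.generate_m_inv_closed) auto
    ultimately have "a \<otimes>\<^bsub>?G\<^esub> inv\<^bsub>?G\<^esub> b \<in> generate ?G (frag_of ` X)"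
      by (blast intro: generate.eng)
    then show "a - b \<in> generate ?G (frag_of ` X)"
      using \<open>Poly_Mapping.keys b \<subseteq> X\<close> by simp
  next
    fix x assume "x \<in> X"
    then show "frag_of x \<in> generate ?G (frag_of ` X)"
      by (simp add: generate.incl)
  qed
qed

lemma hom_free_Abelian_group_mono:
  "h \<in> hom G (free_Abelian_group Y) \<Longrightarrow> Y \<subseteq> X \<Longrightarrow> h \<in> hom G (free_Abelian_group X)"
  by (fastforce simp: hom_def Pi_def)

lemma diffs_free_Abelian_group:
  assumes "e \<subseteq> X \<times> X"
  shows "{frag_of x \<otimes>\<^bsub>free_Abelian_group X\<^esub> inv\<^bsub>free_Abelian_group X\<^esub> frag_of y | x y. (x, y) \<in> e}
       = {frag_of x - frag_of y | x y. (x, y) \<in> e}"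
proof -
  have "frag_of x \<otimes>\<^bsub>free_Abelian_group X\<^esub> inv\<^bsub>free_Abelian_group X\<^esub> frag_of y = frag_of x - frag_of y"
    if "(x, y) \<in> e" for x y
    using assms that by auto
  then show ?thesis
    by (intro Collect_cong) metis
qed

lemma carrier_free_Boolean_group [simp]:
  "A \<in> carrier (free_Boolean_group X) \<longleftrightarrow> finite A \<and> A \<subseteq> X"
  by (simp add: free_Boolean_group_def)

lemma mult_free_Boolean_group [simp]: "A \<otimes>\<^bsub>free_Boolean_group X\<^esub> B = (A - B) \<union> (B - A)"
  by (simp add: free_Boolean_group_def)

lemma one_free_Boolean_group [simp]: "\<one>\<^bsub>free_Boolean_group X\<^esub> = {}"
  by (simp add: free_Boolean_group_def)

lemma comm_group_free_Boolean_group: "comm_group (free_Boolean_group X)"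
  by (rule comm_groupI) auto

lemma group_free_Boolean_group [simp]: "group (free_Boolean_group X)"
  using comm_group_free_Boolean_group by (rule comm_group.axioms(2))

lemma boolean_group_free_Boolean_group: "boolean_group (free_Boolean_group X)"
  by (auto simp: boolean_group_def)

lemma carrier_free_Boolean_group_subset_generate:
  "carrier (free_Boolean_group X) \<subseteq> generate (free_Boolean_group X) ((\<lambda>x. {x}) ` X)"
proof
  let ?G = "free_Boolean_group X"
  fix A assume "A \<in> carrier ?G"
  then have "finite A" "A \<subseteq> X" by auto
  then show "A \<in> generate ?G ((\<lambda>x. {x}) ` X)"
  proof (induction rule: finite_induct)
    case empty
    then show ?case using generate.one[of ?G] by simp
  next
    case (insert x A)
    have "{x} \<in> generate ?G ((\<lambda>x. {x}) ` X)"
      using insert(4) by (auto intro: generate.incl)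
    with insert have "A \<otimes>\<^bsub>?G\<^esub> {x} \<in> generate ?G ((\<lambda>x. {x}) ` X)"
      by (blast intro: generate.eng)
    moreover have "A \<otimes>\<^bsub>?G\<^esub> {x} = insert x A"
      using insert(2) by auto
    ultimately show ?case by simp
  qed
qed

lemma hom_free_Boolean_group_mono:
  "h \<in> hom G (free_Boolean_group Y) \<Longrightarrow> Y \<subseteq> X \<Longrightarrow> h \<in> hom G (free_Boolean_group X)"
  by (fastforce simp: hom_def Pi_def)

lemma is_A_NA_extension:
  fixes X :: "'a set" and H :: "('a \<Rightarrow>\<^sub>0 int) monoid"
  assumes "is_A_NA X U T" "comm_group H" "non_archimedean_group H S" "Hausdorff_space S"
    and "unif_cont_into_group X U H S f"
  obtains h where "cont_hom (free_Abelian_group X) T H S h" "\<forall>x\<in>X. h (frag_of x) = f x"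
  using assms unfolding is_A_NA_def by blast

lemma is_B_NA_extension:
  fixes X :: "'a set" and H :: "'a set monoid"
  assumes "is_B_NA X U T" "boolean_group H" "non_archimedean_group H S" "Hausdorff_space S"
    and "unif_cont_into_group X U H S f"
  obtains h where "cont_hom (free_Boolean_group X) T H S h" "\<forall>x\<in>X. h {x} = f x"
  using assms unfolding is_B_NA_def by blast

lemma nbhd_base_at_one_A_NA:
  assumes B: "uniformity_base U B" "\<forall>e\<in>B. equiv X e" and T: "is_A_NA X U T"
  shows "nbhd_base_at_one (free_Abelian_group X) T
           ((\<lambda>e. generate (free_Abelian_group X) {frag_of x - frag_of y | x y. (x, y) \<in> e}) ` B)"
proof -
  let ?G = "free_Abelian_group X"
  have G: "non_archimedean_group ?G T" and i: "unif_cont_into_group X U ?G T frag_of"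
    using T by (auto simp: is_A_NA_def)
  have e_sub: "e \<subseteq> X \<times> X" if "e \<in> B" for e
    using B(2) that by (auto simp: equiv_def refl_on_def)
  have topological_group: "topological_group ?G T"
    using G by (simp add: non_archimedean_group_def)
  have frag_of_subset: "frag_of ` X \<subseteq> carrier ?G"
    by auto
  have "nbhd_base_at_one ?G T
          ((\<lambda>e. generate ?G {frag_of x \<otimes>\<^bsub>?G\<^esub> inv\<^bsub>?G\<^esub> frag_of y | x y. (x, y) \<in> e}) ` B)"
  proof (rule nbhd_base_at_one_generate_diffs[OF G i B(1) e_sub])
    fix e assume "e \<in> B"
    then have "equiv X e" "e \<in> U"
      using B by (auto simp: uniformity_base_def)
    then obtain r where r: "\<And>x. x \<in> X \<Longrightarrow> (x, r x) \<in> e" "\<And>x y. (x, y) \<in> e \<Longrightarrow> r x = r y"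
      using equiv_representative_map by blast
    \<comment> \<open>The universal property only quantifies over targets with the carrier type of A(X).\<close>
    let ?H = "free_Abelian_group (r ` X)"
    let ?S = "discrete_topology (carrier ?H)"
    have H: "non_archimedean_group ?H ?S" "Hausdorff_space ?S"
      by (simp_all add: non_archimedean_group_discrete_topology)
    have "unif_cont_into_group X U ?H ?S (\<lambda>x. frag_of (r x))"
      using \<open>e \<in> U\<close> r(2) e_sub[OF \<open>e \<in> B\<close>]
      by (intro unif_cont_into_group_if_constant_on_entourage) auto
    then obtain h where h: "cont_hom ?G T ?H ?S h" and h_gen: "\<forall>x\<in>X. h (frag_of x) = frag_of (r x)"
      by (rule is_A_NA_extension[OF T abelian_free_Abelian_group H])
    have "r ` X \<subseteq> X"
      using r(1) \<open>equiv X e\<close> by (auto simp: equiv_def refl_on_def)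
    then have "h \<in> hom ?G ?G"
      using h by (auto simp: cont_hom_def intro: hom_free_Abelian_group_mono)
    moreover have "continuous_map T ?S h"
      using h by (simp add: cont_hom_def)
    moreover have "\<forall>x\<in>X. h (frag_of x) = frag_of (r x) \<and> (x, r x) \<in> e"
      using h_gen r(1) by blast
    ultimately show "\<exists>W. openin T W \<and> \<one>\<^bsub>?G\<^esub> \<in> W \<and>
        W \<subseteq> generate ?G {frag_of x \<otimes>\<^bsub>?G\<^esub> inv\<^bsub>?G\<^esub> frag_of y | x y. (x, y) \<in> e}"
      by (rule open_nbhd_in_generate_diffs[OF topological_group abelian_free_Abelian_group
            frag_of_subset carrier_free_Abelian_group_subset_generate e_sub[OF \<open>e \<in> B\<close>]])
  qed
  moreover have "(\<lambda>e. generate ?G {frag_of x \<otimes>\<^bsub>?G\<^esub> inv\<^bsub>?G\<^esub> frag_of y | x y. (x, y) \<in> e}) ` B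
      = (\<lambda>e. generate ?G {frag_of x - frag_of y | x y. (x, y) \<in> e}) ` B"
    using e_sub by (intro image_cong refl arg_cong[where f = "generate ?G"] diffs_free_Abelian_group)
  ultimately show ?thesis
    by simp
qed

lemma nbhd_base_at_one_B_NA:
  assumes B: "uniformity_base U B" "\<forall>e\<in>B. equiv X e" and T: "is_B_NA X U T"
  shows "nbhd_base_at_one (free_Boolean_group X) T
           ((\<lambda>e. generate (free_Boolean_group X)
              {{x} \<otimes>\<^bsub>free_Boolean_group X\<^esub> inv\<^bsub>free_Boolean_group X\<^esub> {y} | x y. (x, y) \<in> e}) ` B)"
proof -
  let ?G = "free_Boolean_group X"
  have G: "non_archimedean_group ?G T" and i: "unif_cont_into_group X U ?G T (\<lambda>x. {x})"
    using T by (auto simp: is_B_NA_def)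
  have e_sub: "e \<subseteq> X \<times> X" if "e \<in> B" for e
    using B(2) that by (auto simp: equiv_def refl_on_def)
  have topological_group: "topological_group ?G T"
    using G by (simp add: non_archimedean_group_def)
  have singleton_subset: "(\<lambda>x. {x}) ` X \<subseteq> carrier ?G"
    by auto
  show ?thesis
  proof (rule nbhd_base_at_one_generate_diffs[OF G i B(1) e_sub])
    fix e assume "e \<in> B"
    then have "equiv X e" "e \<in> U"
      using B by (auto simp: uniformity_base_def)
    then obtain r where r: "\<And>x. x \<in> X \<Longrightarrow> (x, r x) \<in> e" "\<And>x y. (x, y) \<in> e \<Longrightarrow> r x = r y"
      using equiv_representative_map by blast
    let ?H = "free_Boolean_group (r ` X)"
    let ?S = "discrete_topology (carrier ?H)"
    have H: "non_archimedean_group ?H ?S" "Hausdorff_space ?S"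
      by (simp_all add: non_archimedean_group_discrete_topology)
    have "unif_cont_into_group X U ?H ?S (\<lambda>x. {r x})"
      using \<open>e \<in> U\<close> r(2) e_sub[OF \<open>e \<in> B\<close>]
      by (intro unif_cont_into_group_if_constant_on_entourage) auto
    then obtain h where h: "cont_hom ?G T ?H ?S h" and h_gen: "\<forall>x\<in>X. h {x} = {r x}"
      by (rule is_B_NA_extension[OF T boolean_group_free_Boolean_group H])
    have "r ` X \<subseteq> X"
      using r(1) \<open>equiv X e\<close> by (auto simp: equiv_def refl_on_def)
    then have "h \<in> hom ?G ?G"
      using h by (auto simp: cont_hom_def intro: hom_free_Boolean_group_mono)
    moreover have "continuous_map T ?S h"
      using h by (simp add: cont_hom_def)
    moreover have "\<forall>x\<in>X. h {x} = {r x} \<and> (x, r x) \<in> e"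
      using h_gen r(1) by blast
    ultimately show "\<exists>W. openin T W \<and> \<one>\<^bsub>?G\<^esub> \<in> W \<and>
        W \<subseteq> generate ?G {{x} \<otimes>\<^bsub>?G\<^esub> inv\<^bsub>?G\<^esub> {y} | x y. (x, y) \<in> e}"
      by (rule open_nbhd_in_generate_diffs[OF topological_group comm_group_free_Boolean_group
            singleton_subset carrier_free_Boolean_group_subset_generate e_sub[OF \<open>e \<in> B\<close>]])
  qed
qed

theorem theorem4p14:
  fixes X :: "'a set" and U :: "('a \<times> 'a) set set" and B :: "('a \<times> 'a) set set"
  assumes "non_archimedean_uniform_space X U"
    and "uniformity_base U B"
    and "\<forall>e\<in>B. equiv X e"
  shows "(\<forall>T. is_A_NA X U T \<longrightarrow>
            nbhd_base_at_one (free_Abelian_group X) T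
              ((\<lambda>e. generate (free_Abelian_group X) {frag_of x - frag_of y | x y. (x, y) \<in> e}) ` B))
       \<and> (\<forall>T. is_B_NA X U T \<longrightarrow>
            nbhd_base_at_one (free_Boolean_group X) T
              ((\<lambda>e. generate (free_Boolean_group X)
                      {{x} \<otimes>\<^bsub>free_Boolean_group X\<^esub> inv\<^bsub>free_Boolean_group X\<^esub> {y} | x y. (x, y) \<in> e}) ` B))"
  using nbhd_base_at_one_A_NA[OF assms(2,3)] nbhd_base_at_one_B_NA[OF assms(2,3)] by blast

end
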